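(* Let $\mathbf v,\mathbf o\in\mathbb{R}^n$, $\mathbf u\in\mathbb{R}^n\setminus\{0\}$, $d\in\mathbb{R}$ and $r>0$, and consider the problem $$f^*=\min_{\mathbf w\in\mathbb{R}^n}\mathbf v^T\mathbf w\quad\text{s.t.}\quad\mathbf u^T\mathbf w\le d,\ \ \|\mathbf w-\mathbf o\|\le r,$$ assumed feasible in the sense that $\frac{|\mathbf u^T\mathbf o-d|}{\|\mathbf u\|}\le r$. Let $d'=d-\mathbf u^T\mathbf o$. Then: 1. If $\mathbf v^T\mathbf u+\frac{\|\mathbf v\|d'}{r}\ge0$, then $f^*=\mathbf v^T\mathbf o-r\|\mathbf v\|$. 2. Otherwise, $$f^*=\mathbf v^T\mathbf o-\|\mathbf v^\perp\|\sqrt{r^2-\frac{(d')^2}{\|\mathbf u\|^2}}+\frac{\mathbf v^T\mathbf u\,d'}{\|\mathbf u\|^2},$$ where $\mathbf v^\perp=\mathbf v-\frac{\mathbf v^T\mathbf u}{\|\mathbf u\|^2}\mathbf u$.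
   Context: $\|\cdot\|$ denotes the Euclidean norm. *)

theory Defs
  imports "HOL-Analysis.Analysis"
begin

definition feas_set :: "'a::euclidean_space \<Rightarrow> real \<Rightarrow> 'a \<Rightarrow> real \<Rightarrow> 'a set" where
  "feas_set u d c r = {w. u \<bullet> w \<le> d \<and> norm (w - c) \<le> r}"

definition is_min_value :: "'a::euclidean_space \<Rightarrow> 'a set \<Rightarrow> real \<Rightarrow> bool" where
  "is_min_value v S f \<longleftrightarrow> (\<exists>w\<in>S. v \<bullet> w = f) \<and> (\<forall>w\<in>S. f \<le> v \<bullet> w)"

end

theory Submission
  imports Defs
begin

text \<open>After translating the centre to the origin, the minimum over the ball alone is
  \<open>-r \<parallel>v\<parallel>\<close>, attained at \<open>-r v / \<parallel>v\<parallel>\<close>; the first case is exactly when this point satisfies the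
  half-space constraint. Otherwise the constraint is active: the minimiser lies on the slice of
  the ball by the hyperplane \<open>u\<^sup>T w = d\<close>, a ball of radius
  \<open>S = \<surd>(r\<^sup>2 - d\<^sup>2/\<parallel>u\<parallel>\<^sup>2)\<close>, in direction \<open>-v\<^sup>\<perp>\<close>. Optimality follows from weak Lagrangian
  duality, \<open>v\<^sup>T w \<ge> -\<mu> d - r \<parallel>v + \<mu> u\<parallel>\<close> for \<open>\<mu> \<ge> 0\<close>, with a multiplier that is nonnegative
  precisely in the second case. When \<open>S = 0\<close> no multiplier exists, but then the feasible set
  is a single point.\<close>

text \<open>With \<open>N = \<parallel>u\<parallel>\<^sup>2\<close>, the numbers \<open>a/\<surd>N, b\<close> are the coordinates of a vector of length \<open>m\<close> and
  \<open>S, d/\<surd>N\<close> those of a vector of length \<open>r\<close>; the sign of \<open>a S + b d\<close> is that of the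
  multiplier used below.\<close>

lemma Lagrange_multiplier_nonneg:
  fixes a b d m r S N :: real
  assumes "N > 0" "r > 0" "b \<ge> 0" "S \<ge> 0" "m \<ge> 0"
    and m2: "m\<^sup>2 * N = a\<^sup>2 + b\<^sup>2 * N" and r2: "r\<^sup>2 * N = S\<^sup>2 * N + d\<^sup>2"
    and neg: "a * r + m * d < 0"
  shows "a * S + b * d \<le> 0"
proof -
  have "((m * d)\<^sup>2 - (a * r)\<^sup>2) * N = (m\<^sup>2 * N) * d\<^sup>2 - a\<^sup>2 * (r\<^sup>2 * N)"
    by (simp add: power_mult_distrib algebra_simps)
  also have "\<dots> = ((b * d)\<^sup>2 - (a * S)\<^sup>2) * N"
    unfolding m2 r2 by (simp add: power_mult_distrib algebra_simps)
  finally have squares: "(m * d)\<^sup>2 - (a * r)\<^sup>2 = (b * d)\<^sup>2 - (a * S)\<^sup>2" using \<open>N > 0\<close> by simp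
  consider "d \<ge> 0" | "d < 0" "a \<le> 0" | "d < 0" "a > 0" by linarith
  then show ?thesis
  proof cases
    case 1
    then have "0 \<le> m * d" "m * d \<le> - (a * r)" using assms by simp_all
    then have "(m * d)\<^sup>2 \<le> (a * r)\<^sup>2" using power_mono[of "m * d" "- (a * r)" 2] by simp
    then have "\<bar>b * d\<bar> \<le> \<bar>a * S\<bar>" using squares abs_le_square_iff by fastforce
    moreover have "a < 0" using 1 assms by (smt (verit) split_mult_pos_le)
    ultimately show ?thesis using 1 assms by (simp add: abs_mult)
  next
    case 2
    then show ?thesis using assms by (simp add: mult_nonpos_nonneg mult_nonneg_nonpos add_nonpos_nonpos)
  next
    case 3
    then have "0 \<le> a * r" "a * r \<le> - (m * d)" using assms by simp_all
    then have "(a * r)\<^sup>2 \<le> (m * d)\<^sup>2" using power_mono[of "a * r" "- (m * d)" 2] by simp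
    then have "\<bar>a * S\<bar> \<le> \<bar>b * d\<bar>" using squares abs_le_square_iff by fastforce
    then show ?thesis using 3 assms by (simp add: abs_mult)
  qed
qed

definition orth_comp :: "'a::real_inner \<Rightarrow> 'a \<Rightarrow> 'a" where
  "orth_comp u v = v - ((v \<bullet> u) / (norm u)\<^sup>2) *\<^sub>R u"

lemma inner_orth_comp_left:
  assumes "u \<noteq> 0" shows "orth_comp u v \<bullet> u = 0"
  using assms by (simp add: orth_comp_def inner_diff_left dot_square_norm)

lemma inner_orth_comp_right:
  assumes "u \<noteq> 0" shows "v \<bullet> orth_comp u v = (norm (orth_comp u v))\<^sup>2"
proof -
  have "v = orth_comp u v + ((v \<bullet> u) / (norm u)\<^sup>2) *\<^sub>R u" by (simp add: orth_comp_def)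
  then have "v \<bullet> orth_comp u v = orth_comp u v \<bullet> orth_comp u v + ((v \<bullet> u) / (norm u)\<^sup>2) * (orth_comp u v \<bullet> u)"
    by (metis inner_add_left inner_commute inner_scaleR_left)
  then show ?thesis using inner_orth_comp_left[OF assms] by (simp add: power2_norm_eq_inner)
qed

lemma norm_orth_comp:
  assumes "u \<noteq> 0"
  shows "(norm (orth_comp u v))\<^sup>2 = (norm v)\<^sup>2 - (v \<bullet> u)\<^sup>2 / (norm u)\<^sup>2"
proof -
  have "(norm (orth_comp u v))\<^sup>2 = v \<bullet> v - ((v \<bullet> u) / (norm u)\<^sup>2) * (v \<bullet> u)"
    using inner_orth_comp_right[OF assms, of v]
    by (simp add: orth_comp_def inner_diff_right inner_commute[of u v])
  then show ?thesis by (simp add: dot_square_norm power2_eq_square)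
qed

lemma norm_scaleR_add_orth_comp:
  assumes "u \<noteq> 0"
  shows "(norm (t *\<^sub>R u + orth_comp u v))\<^sup>2 = t\<^sup>2 * (norm u)\<^sup>2 + (norm (orth_comp u v))\<^sup>2"
proof -
  have "orthogonal (t *\<^sub>R u) (orth_comp u v)"
    using inner_orth_comp_left[OF assms, of v] by (simp add: orthogonal_def inner_commute)
  then show ?thesis by (simp add: norm_add_Pythagorean power_mult_distrib)
qed

lemma slice_radicand_nonneg:
  fixes u :: "'a::real_normed_vector"
  assumes "u \<noteq> 0" "\<bar>d\<bar> \<le> r * norm u"
  shows "0 \<le> r\<^sup>2 - d\<^sup>2 / (norm u)\<^sup>2"
proof -
  have "\<bar>d\<bar> / norm u \<le> r" using assms by (simp add: divide_le_eq)
  then have "(\<bar>d\<bar> / norm u)\<^sup>2 \<le> r\<^sup>2" by (rule power_mono) simp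
  then show ?thesis by (simp add: power_divide)
qed

lemma weak_duality:
  fixes u v x :: "'a::euclidean_space"
  assumes "x \<in> feas_set u d 0 r" "\<mu> \<ge> 0"
  shows "- \<mu> * d - r * norm (v + \<mu> *\<^sub>R u) \<le> v \<bullet> x"
proof -
  have "norm x \<le> r" "\<mu> * (u \<bullet> x) \<le> \<mu> * d" using assms by (simp_all add: feas_set_def mult_left_mono)
  moreover have "- (norm (v + \<mu> *\<^sub>R u) * norm x) \<le> (v + \<mu> *\<^sub>R u) \<bullet> x"
    using Cauchy_Schwarz_ineq2[of "v + \<mu> *\<^sub>R u" x] by linarith
  ultimately show ?thesis
    using mult_left_mono[of "norm x" r "norm (v + \<mu> *\<^sub>R u)"] by (simp add: inner_add_left algebra_simps)
qed

lemma feas_set_tangent: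
  fixes u :: "'a::euclidean_space"
  assumes "u \<noteq> 0"
  shows "feas_set u (- (r * norm u)) 0 r \<subseteq> {- (r / norm u) *\<^sub>R u}"
proof
  fix x assume "x \<in> feas_set u (- (r * norm u)) 0 r"
  then have ux: "u \<bullet> x \<le> - (r * norm u)" and nx: "norm x \<le> r" by (simp_all add: feas_set_def)
  have "0 \<le> r" using nx norm_ge_zero order_trans by blast
  have "(norm (x + (r / norm u) *\<^sub>R u))\<^sup>2 = (norm x)\<^sup>2 + 2 * (r / norm u) * (u \<bullet> x) + r\<^sup>2"
    using dot_norm[of x "(r / norm u) *\<^sub>R u"] assms \<open>0 \<le> r\<close> by (simp add: inner_commute field_simps)
  also have "\<dots> \<le> r\<^sup>2 + 2 * (r / norm u) * (- (r * norm u)) + r\<^sup>2"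
    using nx ux \<open>0 \<le> r\<close> by (intro add_mono mult_left_mono power_mono) simp_all
  also have "\<dots> = 0" using assms by (simp add: power2_eq_square)
  finally show "x \<in> {- (r / norm u) *\<^sub>R u}" by (simp add: add_eq_0_iff)
qed

lemma halfspace_active_tangent:
  fixes u v :: "'a::real_inner"
  assumes "r > 0" "d\<^sup>2 = (r * norm u)\<^sup>2" "(v \<bullet> u) * r + norm v * d < 0"
  shows "d = - (r * norm u)"
proof (rule ccontr)
  assume "d \<noteq> - (r * norm u)"
  then have "d = r * norm u" using assms(2) by (simp add: power2_eq_iff)
  then have "(v \<bullet> u) * r + norm v * d = r * (v \<bullet> u + norm v * norm u)" by (simp add: algebra_simps)
  moreover have "0 \<le> v \<bullet> u + norm v * norm u" using Cauchy_Schwarz_ineq2[of v u] by linarith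
  ultimately show False using assms(1,3) by (simp add: zero_le_mult_iff) (meson not_le mult_nonneg_nonneg less_imp_le)
qed

lemma min_value_ball_halfspace_inactive:
  fixes u v :: "'a::euclidean_space"
  assumes "r > 0" "- (r * norm u) \<le> d" "(v \<bullet> u) * r + norm v * d \<ge> 0"
  shows "is_min_value v (feas_set u d 0 r) (- (r * norm v))"
proof -
  have "- (r * norm v) \<le> v \<bullet> x" if "x \<in> feas_set u d 0 r" for x
    using weak_duality[OF that order_refl, of v] by simp
  moreover obtain x where "x \<in> feas_set u d 0 r" "v \<bullet> x = - (r * norm v)"
  proof (cases "v = 0")
    case True
    have "- (r / norm u) *\<^sub>R u \<in> feas_set u d 0 r"
      using assms by (cases "u = 0") (auto simp: feas_set_def power2_norm_eq_inner[symmetric] power2_eq_square)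
    with True that show ?thesis by simp
  next
    case False
    have "- (r / norm v) *\<^sub>R v \<in> feas_set u d 0 r"
      using assms False by (simp add: feas_set_def inner_commute field_simps)
    with False that show ?thesis by (simp add: power2_norm_eq_inner[symmetric] power2_eq_square)
  qed
  ultimately show ?thesis unfolding is_min_value_def by blast
qed

lemma feasible_point_halfspace_active:
  fixes u v :: "'a::euclidean_space"
  assumes "u \<noteq> 0" "\<bar>d\<bar> \<le> r * norm u"
  defines "S \<equiv> sqrt (r\<^sup>2 - d\<^sup>2 / (norm u)\<^sup>2)"
  defines "p \<equiv> (d / (norm u)\<^sup>2) *\<^sub>R u - (S / norm (orth_comp u v)) *\<^sub>R orth_comp u v"
  shows "p \<in> feas_set u d 0 r"
    and "v \<bullet> p = (v \<bullet> u) * d / (norm u)\<^sup>2 - norm (orth_comp u v) * S"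
proof -
  let ?w = "orth_comp u v"
  have wu: "?w \<bullet> u = 0" by (rule inner_orth_comp_left[OF assms(1)])
  have S2: "S\<^sup>2 = r\<^sup>2 - d\<^sup>2 / (norm u)\<^sup>2"
    using slice_radicand_nonneg[OF assms(1,2)] by (simp add: S_def)
  have "orthogonal ((d / (norm u)\<^sup>2) *\<^sub>R u) (- (S / norm ?w) *\<^sub>R ?w)"
    using wu by (simp add: orthogonal_def inner_commute)
  then have "(norm p)\<^sup>2 = (norm ((d / (norm u)\<^sup>2) *\<^sub>R u))\<^sup>2 + (norm ((S / norm ?w) *\<^sub>R ?w))\<^sup>2"
    unfolding p_def diff_conv_add_uminus by (subst norm_add_Pythagorean) simp_all
  also have "\<dots> \<le> d\<^sup>2 / (norm u)\<^sup>2 + S\<^sup>2"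
  proof -
    have "norm ((d / (norm u)\<^sup>2) *\<^sub>R u) = \<bar>d\<bar> / norm u" by (simp add: power2_eq_square)
    moreover have "norm ((S / norm ?w) *\<^sub>R ?w) \<le> \<bar>S\<bar>" by (cases "?w = 0") simp_all
    ultimately show ?thesis by (simp add: power_divide power_mono)
  qed
  finally have "(norm p)\<^sup>2 \<le> r\<^sup>2" using S2 by simp
  moreover have "0 \<le> r" using assms(1,2) by (smt (verit) abs_ge_zero zero_le_mult_iff zero_less_norm_iff)
  ultimately have "norm p \<le> r" by (rule power2_le_imp_le)
  moreover have "u \<bullet> p = d"
    using wu assms(1) by (simp add: p_def inner_diff_right inner_commute power2_norm_eq_inner)
  ultimately show "p \<in> feas_set u d 0 r" by (simp add: feas_set_def)
  show "v \<bullet> p = (v \<bullet> u) * d / (norm u)\<^sup>2 - norm ?w * S"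
  proof -
    have "v \<bullet> p = (v \<bullet> u) * d / (norm u)\<^sup>2 - (S / norm ?w) * (norm ?w)\<^sup>2"
      using inner_orth_comp_right[OF assms(1), of v] by (simp add: p_def inner_diff_right)
    also have "(S / norm ?w) * (norm ?w)\<^sup>2 = norm ?w * S" by (simp add: power2_eq_square)
    finally show ?thesis .
  qed
qed

lemma lower_bound_halfspace_active:
  fixes u v x :: "'a::euclidean_space"
  assumes "u \<noteq> 0" "r > 0" "\<bar>d\<bar> \<le> r * norm u" "(v \<bullet> u) * r + norm v * d < 0"
    and x: "x \<in> feas_set u d 0 r"
  defines "S \<equiv> sqrt (r\<^sup>2 - d\<^sup>2 / (norm u)\<^sup>2)"
  shows "(v \<bullet> u) * d / (norm u)\<^sup>2 - norm (orth_comp u v) * S \<le> v \<bullet> x"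
proof -
  define N a b where "N = (norm u)\<^sup>2" and "a = v \<bullet> u" and "b = norm (orth_comp u v)"
  have "N > 0" using assms(1) by (simp add: N_def)
  have "S \<ge> 0" "S\<^sup>2 = r\<^sup>2 - d\<^sup>2 / N"
    using slice_radicand_nonneg[OF assms(1,3)] by (simp_all add: S_def N_def)
  then have r2: "r\<^sup>2 * N = S\<^sup>2 * N + d\<^sup>2" using \<open>N > 0\<close> by (simp add: field_simps)
  have m2: "(norm v)\<^sup>2 * N = a\<^sup>2 + b\<^sup>2 * N"
    using norm_orth_comp[OF assms(1), of v] \<open>N > 0\<close> by (simp add: N_def a_def b_def field_simps)
  from \<open>S \<ge> 0\<close> consider "S = 0" | "S > 0" by linarith
  then show ?thesis
  proof cases
    case 1
    then have "d\<^sup>2 = (r * norm u)\<^sup>2" using r2 by (simp add: N_def power_mult_distrib)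
    then have "d = - (r * norm u)" using halfspace_active_tangent assms(2,4) by blast
    then have "x = - (r / norm u) *\<^sub>R u" using feas_set_tangent[OF assms(1), of r] x by auto
    then show ?thesis using 1 \<open>d = - (r * norm u)\<close> assms(1) by (simp add: inner_commute power2_eq_square mult.commute)
  next
    case 2
    text \<open>The multiplier makes \<open>v + \<mu> u\<close> a negative multiple of the minimiser, so the
      duality bound is tight.\<close>
    define \<mu> where "\<mu> = - (a * S + b * d) / (N * S)"
    have "a * S + b * d \<le> 0"
      using Lagrange_multiplier_nonneg[OF \<open>N > 0\<close> assms(2) _ \<open>S \<ge> 0\<close> _ m2 r2] assms(4)
      by (simp add: a_def b_def)
    then have "\<mu> \<ge> 0" using 2 \<open>N > 0\<close> by (simp add: \<mu>_def divide_nonpos_pos)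
    define t where "t = - (b * d) / (N * S)"
    have "\<mu> = t - a / N" using 2 \<open>N > 0\<close> by (simp add: \<mu>_def t_def field_simps)
    then have decomp: "v + \<mu> *\<^sub>R u = t *\<^sub>R u + orth_comp u v"
      unfolding orth_comp_def a_def N_def by (simp only: scaleR_diff_left) (simp add: algebra_simps)
    have "(norm (v + \<mu> *\<^sub>R u))\<^sup>2 = t\<^sup>2 * N + b\<^sup>2"
      unfolding decomp N_def b_def by (rule norm_scaleR_add_orth_comp[OF assms(1)])
    also have "\<dots> = b\<^sup>2 * (S\<^sup>2 * N + d\<^sup>2) / (S\<^sup>2 * N)"
      using 2 \<open>N > 0\<close> by (simp add: t_def field_simps power2_eq_square)
    also have "\<dots> = (b * r / S)\<^sup>2"
      using 2 \<open>N > 0\<close> by (simp add: r2[symmetric] power_mult_distrib power_divide)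
    finally have "norm (v + \<mu> *\<^sub>R u) = b * r / S"
      by (rule power2_eq_imp_eq) (use 2 assms(2) in \<open>simp_all add: b_def\<close>)
    moreover have "- \<mu> * d - r * (b * r / S) = a * d / N + b * (d\<^sup>2 - r\<^sup>2 * N) / (N * S)"
      using 2 \<open>N > 0\<close> by (simp add: \<mu>_def field_simps power2_eq_square)
    moreover have "\<dots> = a * d / N - b * S"
      unfolding r2 using 2 \<open>N > 0\<close> by (simp add: field_simps power2_eq_square)
    ultimately show ?thesis using weak_duality[OF x \<open>\<mu> \<ge> 0\<close>, of v] by (simp add: a_def b_def N_def)
  qed
qed

lemma min_value_halfspace_active:
  fixes u v :: "'a::euclidean_space"
  assumes "u \<noteq> 0" "r > 0" "\<bar>d\<bar> \<le> r * norm u" "(v \<bullet> u) * r + norm v * d < 0"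
  shows "is_min_value v (feas_set u d 0 r)
    ((v \<bullet> u) * d / (norm u)\<^sup>2 - norm (orth_comp u v) * sqrt (r\<^sup>2 - d\<^sup>2 / (norm u)\<^sup>2))"
  using feasible_point_halfspace_active[OF assms(1,3)] lower_bound_halfspace_active[OF assms]
  unfolding is_min_value_def by blast

lemma is_min_value_feas_set_translate:
  assumes "is_min_value v (feas_set u (d - u \<bullet> c) 0 r) f"
  shows "is_min_value v (feas_set u d c r) (v \<bullet> c + f)"
proof -
  have mem: "w \<in> feas_set u d c r \<longleftrightarrow> w - c \<in> feas_set u (d - u \<bullet> c) 0 r" for w
    by (simp add: feas_set_def inner_diff_right)
  obtain x where x: "x \<in> feas_set u (d - u \<bullet> c) 0 r" "v \<bullet> x = f"
    and lower: "\<And>y. y \<in> feas_set u (d - u \<bullet> c) 0 r \<Longrightarrow> f \<le> v \<bullet> y"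
    using assms unfolding is_min_value_def by blast
  have "x + c \<in> feas_set u d c r" "v \<bullet> (x + c) = v \<bullet> c + f"
    using x mem[of "x + c"] by (simp_all add: inner_add_right)
  moreover have "v \<bullet> c + f \<le> v \<bullet> w" if "w \<in> feas_set u d c r" for w
    using lower[of "w - c"] mem[of w] that by (simp add: inner_diff_right)
  ultimately show ?thesis unfolding is_min_value_def by metis
qed

theorem lemma8:
  fixes v c u :: "'a::euclidean_space" and d r :: real
  assumes "u \<noteq> 0" and "r > 0"
    and "\<bar>u \<bullet> c - d\<bar> / norm u \<le> r"
  shows "(v \<bullet> u + norm v * (d - u \<bullet> c) / r \<ge> 0 \<longrightarrow>
            is_min_value v (feas_set u d c r) (v \<bullet> c - r * norm v))
       \<and> (\<not> (v \<bullet> u + norm v * (d - u \<bullet> c) / r \<ge> 0) \<longrightarrow>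
            is_min_value v (feas_set u d c r)
              (v \<bullet> c
               - norm (v - ((v \<bullet> u) / (norm u)\<^sup>2) *\<^sub>R u)
                 * sqrt (r\<^sup>2 - (d - u \<bullet> c)\<^sup>2 / (norm u)\<^sup>2)
               + (v \<bullet> u) * (d - u \<bullet> c) / (norm u)\<^sup>2))"
proof -
  define d' where "d' = d - u \<bullet> c"
  have feasible: "\<bar>d'\<bar> \<le> r * norm u"
    using assms by (simp add: d'_def divide_le_eq abs_minus_commute)
  have case_iff: "v \<bullet> u + norm v * d' / r \<ge> 0 \<longleftrightarrow> (v \<bullet> u) * r + norm v * d' \<ge> 0"
    using assms(2) by (simp add: field_simps)
  show ?thesis
  proof (intro conjI impI)
    assume "v \<bullet> u + norm v * (d - u \<bullet> c) / r \<ge> 0"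
    then have "(v \<bullet> u) * r + norm v * d' \<ge> 0" using case_iff by (simp add: d'_def)
    moreover have "- (r * norm u) \<le> d'" using feasible by linarith
    ultimately have "is_min_value v (feas_set u d' 0 r) (- (r * norm v))"
      by (intro min_value_ball_halfspace_inactive[OF assms(2)])
    from is_min_value_feas_set_translate[OF this[unfolded d'_def]]
    show "is_min_value v (feas_set u d c r) (v \<bullet> c - r * norm v)" by simp
  next
    assume "\<not> v \<bullet> u + norm v * (d - u \<bullet> c) / r \<ge> 0"
    then have "(v \<bullet> u) * r + norm v * d' < 0" using case_iff by (simp add: d'_def)
    then have "is_min_value v (feas_set u d' 0 r)
        ((v \<bullet> u) * d' / (norm u)\<^sup>2 - norm (orth_comp u v) * sqrt (r\<^sup>2 - d'\<^sup>2 / (norm u)\<^sup>2))"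
      by (rule min_value_halfspace_active[OF assms(1,2) feasible])
    from is_min_value_feas_set_translate[OF this[unfolded d'_def]]
    show "is_min_value v (feas_set u d c r)
              (v \<bullet> c
               - norm (v - ((v \<bullet> u) / (norm u)\<^sup>2) *\<^sub>R u)
                 * sqrt (r\<^sup>2 - (d - u \<bullet> c)\<^sup>2 / (norm u)\<^sup>2)
               + (v \<bullet> u) * (d - u \<bullet> c) / (norm u)\<^sup>2)"
      by (simp add: orth_comp_def algebra_simps)
  qed
qed

end
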